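(* Let $p\ge3$ be a prime, let $U$ be the probability distribution on $\mathbb{F}_p$ that assigns probability $1/2$ to each of $0$ and $1$, and let $D$ be a probability distribution on $\mathbb{F}_p$ such that $|D(x)-p^{-1}|\le p^{-2}$ for each $x\in\mathbb{F}_p$. Then there exists a probability distribution $E$ on $\mathbb{F}_p$ such that $D=U+E$.
   Context: For probability distributions $D',D''$ on a finite abelian group $G$, $D'+D''$ denotes their convolution: $(D'+D'')(x)=\sum_{y+z=x}D'(y)D''(z)$, i.e. the distribution of the sum of independent random variables with distributions $D'$ and $D''$. *)

theory Defs
  imports Complex_Main "HOL-Computational_Algebra.Primes"
begin

text \<open>F_p is represented by the residues {0..<p} (type nat) with addition mod p.
A probability distribution on F_p is a function nat => real, nonnegative on {0..<p},
summing to 1 over {0..<p}; values outside {0..<p} are irrelevant.\<close>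

definition is_distr :: "nat \<Rightarrow> (nat \<Rightarrow> real) \<Rightarrow> bool" where
  "is_distr p D \<longleftrightarrow> (\<forall>x<p. 0 \<le> D x) \<and> (\<Sum>x<p. D x) = 1"

text \<open>Convolution on Z/pZ: (D'+D'')(x) = sum over y+z = x (mod p) of D'(y) D''(z).\<close>
definition conv :: "nat \<Rightarrow> (nat \<Rightarrow> real) \<Rightarrow> (nat \<Rightarrow> real) \<Rightarrow> nat \<Rightarrow> real" where
  "conv p D1 D2 x = (\<Sum>y<p. \<Sum>z<p. if (y + z) mod p = x then D1 y * D2 z else 0)"

definition unif01 :: "nat \<Rightarrow> real" where
  "unif01 x = (if x = 0 \<or> x = 1 then 1/2 else 0)"

end

theory Submission
  imports Defs
begin

text \<open>Convolving with U averages neighbours: (U + E)(x) = (E(x) + E(x - 1))/2. Take for E the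
alternating sum E(x) = sum of (-1)^j D(x - j) over j < p. In E(x) + E(x - 1) everything telescopes
except D(x) and, p being odd, +D(x - p) = D(x); so U + E = D. E has the same total mass as D, and
writing D(x - j) = 1/p + (D(x - j) - 1/p), the constant parts contribute exactly 1/p while the
deviations contribute at most p * p^-2 = 1/p in absolute value, so E \<ge> 0.\<close>

lemma sum_neg_one_power_odd:
  assumes "odd n"
  shows "(\<Sum>j<n. (-1::'a::ring_1) ^ j) = 1"
proof -
  obtain k where "n = Suc (2 * k)" using assms by (metis oddE Suc_eq_plus1)
  then show ?thesis by (induction k arbitrary: n) auto
qed

lemma sum_lessThan_shift_mod:
  fixes h :: "int \<Rightarrow> 'a::comm_monoid_add"
  assumes "n > 0" and periodic: "\<And>i. h (i mod int n) = h i"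
  shows "(\<Sum>x<n. h (int x + c)) = (\<Sum>x<n. h (int x))"
proof (rule sum.reindex_bij_witness[where i = "\<lambda>y. nat ((int y - c) mod int n)"
                                      and j = "\<lambda>x. nat ((int x + c) mod int n)"])
  fix x assume "x \<in> {..<n}"
  then show "nat ((int (nat ((int x + c) mod int n)) - c) mod int n) = x"
    using assms(1) by (simp add: mod_diff_left_eq)
  show "nat ((int x + c) mod int n) \<in> {..<n}" using assms(1) by (simp add: nat_less_iff)
  show "h (int (nat ((int x + c) mod int n))) = h (int x + c)" using assms(1) periodic by simp
next
  fix y assume "y \<in> {..<n}"
  then show "nat ((int (nat ((int y - c) mod int n)) + c) mod int n) = y"
    using assms(1) by (simp add: mod_add_left_eq)
  show "nat ((int y - c) mod int n) \<in> {..<n}" using assms(1) by (simp add: nat_less_iff)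
qed

definition cyclic_ext :: "nat \<Rightarrow> (nat \<Rightarrow> 'a) \<Rightarrow> int \<Rightarrow> 'a" where
  "cyclic_ext p D i = D (nat (i mod int p))"

lemma cyclic_ext_mod [simp]: "cyclic_ext p D (i mod int p) = cyclic_ext p D i"
  by (simp add: cyclic_ext_def)

lemma cyclic_ext_of_nat [simp]: "x < p \<Longrightarrow> cyclic_ext p D (int x) = D x"
  by (simp add: cyclic_ext_def)

definition alternating_sum :: "nat \<Rightarrow> (int \<Rightarrow> real) \<Rightarrow> int \<Rightarrow> real" where
  "alternating_sum n d i = (\<Sum>j<n. (-1) ^ j * d (i - int j))"

lemma alternating_sum_mod:
  assumes periodic: "\<And>i. d (i mod int n) = d i"
  shows "alternating_sum n d (i mod int n) = alternating_sum n d i"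
  unfolding alternating_sum_def
proof (rule sum.cong[OF refl])
  fix j
  have "d (i mod int n - int j) = d ((i mod int n - int j) mod int n)" by (rule periodic[symmetric])
  also have "\<dots> = d ((i - int j) mod int n)" by (simp add: mod_diff_left_eq)
  finally show "(-1) ^ j * d (i mod int n - int j) = (-1) ^ j * d (i - int j)"
    by (simp add: periodic)
qed

lemma alternating_sum_recurrence:
  assumes "odd n" and periodic: "\<And>i. d (i mod int n) = d i"
  shows "alternating_sum n d i + alternating_sum n d (i - 1) = 2 * d i"
proof -
  define f where "f j = (-1) ^ j * d (i - int j)" for j
  have "alternating_sum n d (i - 1) = - (\<Sum>j<n. f (Suc j))"
    by (simp add: alternating_sum_def f_def sum_negf algebra_simps)
  also have "(\<Sum>j<n. f (Suc j)) = alternating_sum n d i + f n - f 0"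
    using sum.lessThan_Suc_shift[of f n] by (simp add: alternating_sum_def f_def)
  also have "f n = - d i"
    using \<open>odd n\<close> periodic[of "i - int n"] periodic[of i] by (simp add: f_def)
  finally show ?thesis by (simp add: f_def)
qed

lemma sum_alternating_sum:
  assumes "odd n" and periodic: "\<And>i. d (i mod int n) = d i"
  shows "(\<Sum>x<n. alternating_sum n d (int x)) = (\<Sum>x<n. d (int x))"
proof -
  have "n > 0" using \<open>odd n\<close> by (rule odd_pos)
  have shift: "(\<Sum>x<n. d (int x + - int j)) = (\<Sum>x<n. d (int x))" for j
    using sum_lessThan_shift_mod[of n d] \<open>n > 0\<close> periodic by blast
  have "(\<Sum>x<n. alternating_sum n d (int x)) = (\<Sum>j<n. (-1) ^ j * (\<Sum>x<n. d (int x + - int j)))"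
    unfolding alternating_sum_def sum_distrib_left by (subst sum.swap) simp
  also have "\<dots> = (\<Sum>j<n. (-1) ^ j) * (\<Sum>x<n. d (int x))"
    by (simp only: shift sum_distrib_right)
  finally show ?thesis using sum_neg_one_power_odd[OF \<open>odd n\<close>, where 'a = real] by simp
qed

lemma alternating_sum_nonneg:
  assumes "odd n" and close: "\<And>i. \<bar>d i - 1 / real n\<bar> \<le> 1 / (real n)\<^sup>2"
  shows "alternating_sum n d i \<ge> 0"
proof -
  define e where "e j = (-1) ^ j * (d (i - int j) - 1 / real n)" for j
  have "alternating_sum n d i = (\<Sum>j<n. (-1) ^ j * (1 / real n) + e j)"
    unfolding alternating_sum_def e_def by (intro sum.cong) (auto simp: algebra_simps)
  also have "\<dots> = (\<Sum>j<n. (-1) ^ j) * (1 / real n) + (\<Sum>j<n. e j)"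
    by (simp only: sum.distrib sum_distrib_right)
  also have "(\<Sum>j<n. (-1::real) ^ j) = 1" using \<open>odd n\<close> by (rule sum_neg_one_power_odd)
  finally have split: "alternating_sum n d i = 1 / real n + (\<Sum>j<n. e j)" by simp
  have "\<bar>\<Sum>j<n. e j\<bar> \<le> (\<Sum>j<n. 1 / (real n)\<^sup>2)"
    by (rule order_trans[OF sum_abs sum_mono]) (simp add: e_def abs_mult close)
  also have "\<dots> = 1 / real n" by (simp add: power2_eq_square)
  finally show ?thesis using split by linarith
qed

lemma conv_eq_sum_cyclic_ext:
  assumes "x < p"
  shows "conv p D1 D2 x = (\<Sum>y<p. D1 y * cyclic_ext p D2 (int x - int y))"
  unfolding conv_def
proof (rule sum.cong[OF refl])
  fix y
  have "(y + z) mod p = x \<longleftrightarrow> z = nat ((int x - int y) mod int p)" if "z < p" for z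
  proof -
    have "(y + z) mod p = x \<longleftrightarrow> (int y + int z) mod int p = int x mod int p"
      using \<open>x < p\<close> by (simp flip: of_nat_add of_nat_mod)
    also have "\<dots> \<longleftrightarrow> int z mod int p = (int x - int y) mod int p"
      by (simp add: mod_eq_dvd_iff algebra_simps)
    also have "\<dots> \<longleftrightarrow> z = nat ((int x - int y) mod int p)"
      using \<open>z < p\<close> by auto
    finally show ?thesis .
  qed
  moreover have "nat ((int x - int y) mod int p) < p" using \<open>x < p\<close> by (simp add: nat_less_iff)
  ultimately show "(\<Sum>z<p. if (y + z) mod p = x then D1 y * D2 z else 0) =
      D1 y * cyclic_ext p D2 (int x - int y)"
    by (simp add: cyclic_ext_def cong: if_cong)
qed

lemma sum_unif01:
  assumes "p \<ge> 2"
  shows "(\<Sum>y<p. unif01 y * g y) = (g 0 + g 1) / 2"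
proof -
  have "(\<Sum>y<p. unif01 y * g y) = (\<Sum>y\<in>{0, 1}. unif01 y * g y)"
    using assms by (intro sum.mono_neutral_right) (auto simp: unif01_def)
  then show ?thesis by (simp add: unif01_def)
qed

theorem lemma3p2:
  fixes p :: nat and D :: "nat \<Rightarrow> real"
  assumes "prime p" and "p \<ge> 3"
    and "is_distr p D"
    and "\<forall>x<p. \<bar>D x - 1 / real p\<bar> \<le> 1 / (real p)^2"
  shows "\<exists>E. is_distr p E \<and> (\<forall>x<p. D x = conv p unif01 E x)"
proof -
  have "odd p" using assms(1,2) prime_odd_nat by auto
  define d where "d = cyclic_ext p D"
  define E where "E x = alternating_sum p d (int x)" for x
  have d_periodic: "d (i mod int p) = d i" for i by (simp add: d_def)
  have d_close: "\<bar>d i - 1 / real p\<bar> \<le> 1 / (real p)\<^sup>2" for i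
    using assms(2,4) by (simp add: d_def cyclic_ext_def nat_less_iff)
  have E_cyclic: "cyclic_ext p E i = alternating_sum p d i" for i
    using assms(2) alternating_sum_mod[where d = d and n = p, OF d_periodic]
    by (simp add: cyclic_ext_def E_def)
  have "is_distr p E"
    using alternating_sum_nonneg[where d = d, OF \<open>odd p\<close> d_close]
      sum_alternating_sum[where d = d, OF \<open>odd p\<close> d_periodic] assms(3)
    by (simp add: is_distr_def E_def d_def)
  moreover have "D x = conv p unif01 E x" if "x < p" for x
  proof -
    have "conv p unif01 E x = (cyclic_ext p E (int x) + cyclic_ext p E (int x - 1)) / 2"
      using assms(2) \<open>x < p\<close> by (simp add: conv_eq_sum_cyclic_ext sum_unif01)
    also have "\<dots> = d (int x)"
      using alternating_sum_recurrence[where d = d, OF \<open>odd p\<close> d_periodic] by (simp add: E_cyclic)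
    also have "\<dots> = D x" using \<open>x < p\<close> by (simp add: d_def)
    finally show ?thesis by simp
  qed
  ultimately show ?thesis by blast
qed

end
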